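(* The set of points of exact period $5$ under $G$ lies on the curve $P_5(u,v)=0$, where \begin{align*} P_5(u,v)={}&-3u^5v^6+3u^4v^2-u^7v^2+uv^3-u^6v-u^5v+2u^3v-4u^3v^2-2uv^4+2u^4v\\ &+6u^2v^4+2u^7v^3-u^7v^4+u^4v^7+v^5+v^7+u^6v^2+6u^2v^7+2v^6+3u^6v^5\\ &+u^3+4uv^7+4u^3v^7-12u^4v^6+14u^5v^5-8u^6v^4-16u^3v^6-5u^5v^3-12u^5v^4\\ &+5u^6v^3+18u^4v^5+19u^3v^4-6u^2v^6+3uv^6+6u^4v^4-16u^4v^3+7u^5v^2\\ &-4uv^5-12u^2v^5-5u^3v^3-2u^2v^2+4u^2v^3, \end{align*} and the Zariski closure in $\mathbb{C}^2$ of this set is this curve (this is the equation of period five orbits on the $(u,v)$-plane).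
   Context: Let \[ G(u,v)=\left(\frac{-u+v+uv}{u},\ \frac{u^{2}-u+v-u^{2}v-uv+uv^{2}+v^{2}}{u}\right), \] defined for $(u,v)\in\mathbb{C}^2$ with $u\neq 0$. A point $(u,v)$ has exact period $n$ under $G$ if the iterates $G^k(u,v)$, $0\le k\le n-1$, all have nonzero first coordinate, $G^n(u,v)=(u,v)$, and $G^k(u,v)\neq(u,v)$ for $0<k<n$. *)

theory Defs
  imports Complex_Main
begin

definition G :: "complex \<times> complex \<Rightarrow> complex \<times> complex" where
  "G p = (let u = fst p; v = snd p in
     ((-u + v + u*v) / u,
      (u^2 - u + v - u^2*v - u*v + u*v^2 + v^2) / u))"

definition exact_period :: "nat \<Rightarrow> complex \<times> complex \<Rightarrow> bool" where
  "exact_period n p \<longleftrightarrow>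
     (\<forall>k<n. fst ((G ^^ k) p) \<noteq> 0) \<and> (G ^^ n) p = p \<and>
     (\<forall>k. 0 < k \<and> k < n \<longrightarrow> (G ^^ k) p \<noteq> p)"

definition poly2 :: "(complex \<Rightarrow> complex \<Rightarrow> complex) \<Rightarrow> bool" where
  "poly2 f \<longleftrightarrow> (\<exists>(n::nat) (c::nat \<Rightarrow> nat \<Rightarrow> complex).
      \<forall>u v. f u v = (\<Sum>i\<le>n. \<Sum>j\<le>n. c i j * u^i * v^j))"

definition zariski_closed :: "(complex \<times> complex) set \<Rightarrow> bool" where
  "zariski_closed A \<longleftrightarrow> (\<exists>F. (\<forall>f\<in>F. poly2 f) \<and> A = {(u,v). \<forall>f\<in>F. f u v = 0})"

definition zariski_closure :: "(complex \<times> complex) set \<Rightarrow> (complex \<times> complex) set" where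
  "zariski_closure S = \<Inter>{A. zariski_closed A \<and> S \<subseteq> A}"

definition P5 :: "complex \<Rightarrow> complex \<Rightarrow> complex" where
  "P5 u v = -3*u^5*v^6 + 3*u^4*v^2 - u^7*v^2 + u*v^3 - u^6*v - u^5*v + 2*u^3*v - 4*u^3*v^2 - 2*u*v^4 + 2*u^4*v
    + 6*u^2*v^4 + 2*u^7*v^3 - u^7*v^4 + u^4*v^7 + v^5 + v^7 + u^6*v^2 + 6*u^2*v^7 + 2*v^6 + 3*u^6*v^5
    + u^3 + 4*u*v^7 + 4*u^3*v^7 - 12*u^4*v^6 + 14*u^5*v^5 - 8*u^6*v^4 - 16*u^3*v^6 - 5*u^5*v^3 - 12*u^5*v^4
    + 5*u^6*v^3 + 18*u^4*v^5 + 19*u^3*v^4 - 6*u^2*v^6 + 3*u*v^6 + 6*u^4*v^4 - 16*u^4*v^3 + 7*u^5*v^2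
    - 4*u*v^5 - 12*u^2*v^5 - 5*u^3*v^3 - 2*u^2*v^2 + 4*u^2*v^3"

end

theory Submission
  imports Defs "HOL-Computational_Algebra.Fundamental_Theorem_Algebra" "HOL-Analysis.Analysis"
begin

text \<open>Write \<open>x k\<close> for the first coordinate of \<open>G\<^sup>k (u, v)\<close> plus one. These numbers obey the
  recurrence \<open>x (k+1) / x k + x (k+2) / x (k+1) = x (k+1) - x k + 2\<close>, and off the lines \<open>u = 0\<close>
  and \<open>u = -1\<close> a point is determined by \<open>x 0\<close> and \<open>x 1\<close>. For a 5-periodic point, alternating
  sums of the five recurrence relations around the cycle give a polynomial system in
  \<open>x 0, \<dots>, x 4\<close>; its first three equations express \<open>x 2, x 3, x 4\<close> rationally in \<open>a = x 0\<close>,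
  \<open>b = x 1\<close>, and the other two both reduce to \<open>(a - b) Q5 a b = 0\<close>, where \<open>Q5\<close> is \<open>P5\<close> in the
  coordinates \<open>(a, b)\<close>. Hence periodic points lie on the curve, and conversely every curve point
  with \<open>u \<notin> {0, -1}\<close> and \<open>v \<noteq> u\<close> has exact period 5. As a polynomial in \<open>v\<close>, \<open>P5\<close> has degree 7
  and leading coefficient \<open>(u + 1)\<^sup>4\<close>, so its roots move continuously with \<open>u\<close> and these generic
  points are dense in the curve; since Zariski-closed sets are closed, the Zariski closure of the
  periodic points is the whole curve.\<close>

text \<open>\<open>P5\<close> in the coordinates \<open>a = u + 1\<close>, \<open>b = (u + 1) v / u\<close>, the shifted first coordinates of
  \<open>(u, v)\<close> and of \<open>G (u, v)\<close>.\<close>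
definition Q5 :: "complex \<Rightarrow> complex \<Rightarrow> complex" where
  "Q5 a b = (a^3 - a^7 * b^4 + 2 * a^7 * b^3 - a^7 * b^2 + 3 * a^6 * b^5 - 9 * a^6 * b^3 + 7 * a^6 * b^2
    - a^6 * b - 3 * a^5 * b^6 - 10 * a^5 * b^5 + 16 * a^5 * b^4 + 7 * a^5 * b^3 - 13 * a^5 * b^2 + 3 * a^5 * b
    + a^4 * b^7 + 12 * a^4 * b^6 + 4 * a^4 * b^5 - 34 * a^4 * b^4 + 14 * a^4 * b^3 + 5 * a^4 * b^2 - a^4 * b
    - 4 * a^3 * b^7 - 16 * a^3 * b^6 + 18 * a^3 * b^5 + 19 * a^3 * b^4 - 21 * a^3 * b^3 + 4 * a^3 * b^2
    - a^3 * b + 6 * a^2 * b^7 + 6 * a^2 * b^6 - 22 * a^2 * b^5 + 6 * a^2 * b^4 + 6 * a^2 * b^3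
    - 2 * a^2 * b^2 - 4 * a * b^7 + 3 * a * b^6 + 6 * a * b^5 - 6 * a * b^4 + a * b^3 + b^7 - 2 * b^6 + b^5)"

lemma Q5_one_left: "Q5 1 b = 1"
  unfolding Q5_def by simp

lemma P5_Q5:
  assumes "u * b = (u + 1) * v"
  shows "(u + 1)^7 * P5 u v = (u + 1)^4 * u^3 * Q5 (u + 1) b"
  using assms unfolding P5_def Q5_def by algebra

text \<open>Satisfied by the shifted first coordinates \<open>x 0, \<dots>, x 4\<close> of a 5-periodic orbit.\<close>
definition five_cycle :: "complex \<Rightarrow> complex \<Rightarrow> complex \<Rightarrow> complex \<Rightarrow> complex \<Rightarrow> bool" where
  "five_cycle a b c d e \<longleftrightarrow>
     b = a * (1 + b - c + d - e) \<and> c = b * (1 + c - d + e - a) \<and> d = c * (1 + d - e + a - b) \<and>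
     e = d * (1 + e - a + b - c) \<and> a = e * (1 + a - b + c - d)"

lemma five_cycle_rotate: "five_cycle a b c d e \<Longrightarrow> five_cycle b c d e a"
  unfolding five_cycle_def by auto

lemma five_cycle_nonzero:
  assumes "five_cycle a b c d e" "a \<noteq> 0"
  shows "b \<noteq> 0 \<and> c \<noteq> 0 \<and> d \<noteq> 0 \<and> e \<noteq> 0"
  using assms unfolding five_cycle_def by (metis mult_zero_left)

definition c_num :: "complex \<Rightarrow> complex \<Rightarrow> complex" where
  "c_num a b = b * (2 * a + a * b - b - a^2)"

definition d_num :: "complex \<Rightarrow> complex \<Rightarrow> complex" where
  "d_num a b = c_num a b * (b + c_num a b + a^2 - 2 * a * b)"

definition e_num :: "complex \<Rightarrow> complex \<Rightarrow> complex" where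
  "e_num a b = a * (a + a * b - b) - a * c_num a b + d_num a b"

lemma five_cycle_iff:
  assumes "a \<noteq> 0"
  shows "five_cycle a b c d e \<longleftrightarrow>
    (a - b) * Q5 a b = 0 \<and> c = c_num a b / a \<and> d = d_num a b / a^2 \<and> e = e_num a b / a^2"
    (is "_ \<longleftrightarrow> ?closes \<and> ?param")
proof -
  have closing_eqs:
    "a^2 * e_num a b - d_num a b * (a^2 + e_num a b - a^3 + b * a^2 - a * c_num a b) = (a - b) * Q5 a b"
    "a^5 - e_num a b * (a^2 + a^3 - b * a^2 + a * c_num a b - d_num a b) = - (a - b) * Q5 a b"
    unfolding c_num_def d_num_def e_num_def Q5_def by algebra+
  show ?thesis
  proof
    assume cyc: "five_cycle a b c d e"
    have ac: "a * c = c_num a b" and ad: "a^2 * d = d_num a b" and ae: "a^2 * e = e_num a b"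
      using cyc unfolding five_cycle_def c_num_def d_num_def e_num_def by algebra+
    have "a^4 * e = a^2 * d * (a^2 + a^2 * e - a^3 + b * a^2 - a * (a * c))"
      using cyc unfolding five_cycle_def by algebra
    then have "(a - b) * Q5 a b = 0"
      unfolding closing_eqs(1)[symmetric] ac ad ae[symmetric] by algebra
    moreover have ?param
      using ac ad ae assms by (auto simp: field_simps)
    ultimately show "?closes \<and> ?param" by blast
  next
    assume "?closes \<and> ?param"
    then have closes: "(a - b) * Q5 a b = 0" and ac: "a * c = c_num a b"
      and ad: "a^2 * d = d_num a b" and ae: "a^2 * e = e_num a b"
      using assms by (auto simp: field_simps)
    have "a^4 * (d * (1 + e - a + b - c)) = a^4 * e"
      using closing_eqs(1) closes ac ad ae by algebra
    moreover have "a^4 * (e * (1 + a - b + c - d)) = a^4 * a"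
      using closing_eqs(2) closes ac ad ae by algebra
    moreover have "a * (a * (1 + b - c + d - e)) = a * b" "a * (b * (1 + c - d + e - a)) = a * c"
      "a^2 * (c * (1 + d - e + a - b)) = a^2 * d"
      using ac ad ae unfolding c_num_def d_num_def e_num_def by algebra+
    ultimately show "five_cycle a b c d e"
      unfolding five_cycle_def using assms by simp
  qed
qed

lemma five_cycle_constant:
  assumes "five_cycle a a c d e" "a \<noteq> 0"
  shows "c = a \<and> d = a \<and> e = a"
  using assms five_cycle_iff[of a a c d e]
  by (simp add: c_num_def d_num_def e_num_def power2_eq_square power3_eq_cube field_simps)

lemma five_cycle_ne_one:
  assumes "five_cycle a b c d e" "a \<noteq> 0" "a \<noteq> b"
  shows "a \<noteq> 1"
  using assms five_cycle_iff[of a b c d e] Q5_one_left by auto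

definition G_recurrence :: "complex \<Rightarrow> complex \<Rightarrow> complex \<Rightarrow> bool" where
  "G_recurrence x y z \<longleftrightarrow> z * x = y * (x * y - y - x^2 + 2 * x)"

lemma G_recurrence_unique: "G_recurrence x y z \<Longrightarrow> G_recurrence x y z' \<Longrightarrow> x \<noteq> 0 \<Longrightarrow> z = z'"
  unfolding G_recurrence_def by (metis mult_right_cancel)

lemma five_cycle_imp_G_recurrence: "five_cycle a b c d e \<Longrightarrow> G_recurrence a b c"
  unfolding five_cycle_def G_recurrence_def by algebra

lemma G_recurrence_iff_quotients:
  assumes "x \<noteq> 0" "y \<noteq> 0"
  shows "G_recurrence x y z \<longleftrightarrow> y / x + z / y = y - x + 2"
  using assms unfolding G_recurrence_def by (auto simp: field_simps power2_eq_square)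

lemma G_recurrences_imp_five_cycle_eq:
  assumes nonzero: "a \<noteq> 0" "b \<noteq> 0" "c \<noteq> 0" "d \<noteq> 0" "e \<noteq> 0"
    and "G_recurrence a b c" "G_recurrence b c d" "G_recurrence c d e" "G_recurrence d e a"
      "G_recurrence e a b"
  shows "b = a * (1 + b - c + d - e)"
proof -
  have q: "b/a + c/b = b - a + 2" "c/b + d/c = c - b + 2" "d/c + e/d = d - c + 2"
    "e/d + a/e = e - d + 2" "a/e + b/a = a - e + 2"
    using assms G_recurrence_iff_quotients by auto
  have "2 * (b/a) = (b/a + c/b) - (c/b + d/c) + (d/c + e/d) - (e/d + a/e) + (a/e + b/a)"
    by simp
  also have "\<dots> = 2 * (1 + b - c + d - e)"
    unfolding q by simp
  finally have "b/a = 1 + b - c + d - e"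
    by (metis mult_cancel_left zero_neq_numeral)
  then show ?thesis
    using nonzero(1) by (simp add: field_simps)
qed

lemma five_cycle_iff_G_recurrence:
  assumes "a \<noteq> 0" "b \<noteq> 0" "c \<noteq> 0" "d \<noteq> 0" "e \<noteq> 0"
  shows "five_cycle a b c d e \<longleftrightarrow> G_recurrence a b c \<and> G_recurrence b c d \<and> G_recurrence c d e \<and>
    G_recurrence d e a \<and> G_recurrence e a b"
  using five_cycle_imp_G_recurrence five_cycle_rotate
    G_recurrences_imp_five_cycle_eq[of a b c d e] G_recurrences_imp_five_cycle_eq[of b c d e a]
    G_recurrences_imp_five_cycle_eq[of c d e a b] G_recurrences_imp_five_cycle_eq[of d e a b c]
    G_recurrences_imp_five_cycle_eq[of e a b c d] assms
  unfolding five_cycle_def by meson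

lemma G_Pair: "G (u, v) = ((- u + v + u * v) / u, (u^2 - u + v - u^2 * v - u * v + u * v^2 + v^2) / u)"
  by (simp add: G_def)

lemma fst_G_shifted: "fst p \<noteq> 0 \<Longrightarrow> fst p * (fst (G p) + 1) = snd p * (fst p + 1)"
  by (cases p) (simp add: G_Pair field_simps)

lemma eq_if_fst_G_eq:
  assumes "fst p = fst q" "fst (G p) = fst (G q)" "fst p \<noteq> 0" "fst p \<noteq> -1"
  shows "p = q"
proof -
  have "fst p + 1 \<noteq> 0"
    using assms(4) by (simp add: eq_neg_iff_add_eq_0[symmetric])
  moreover have "snd p * (fst p + 1) = snd q * (fst p + 1)"
    using fst_G_shifted[of p] fst_G_shifted[of q] assms(1-3) by metis
  ultimately show ?thesis
    using assms(1) by (simp add: prod_eq_iff)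
qed

lemma G_recurrence_along_orbit:
  assumes "fst q \<noteq> 0" "fst q \<noteq> -1" "fst (G q) \<noteq> 0"
  shows "G_recurrence (fst q + 1) (fst (G q) + 1) (fst (G (G q)) + 1)"
proof -
  obtain u v where q: "q = (u, v)"
    by (cases q)
  obtain u1 v1 where q1: "G q = (u1, v1)"
    by (cases "G q")
  define u2 where "u2 = fst (G (G q))"
  have nonzero: "u \<noteq> 0" "u1 \<noteq> 0" "u + 1 \<noteq> 0"
    using assms q q1 by (simp_all add: eq_neg_iff_add_eq_0[symmetric])
  have "u * (u1 + 1) = v * (u + 1)" "u1 * (u2 + 1) = v1 * (u1 + 1)"
    using fst_G_shifted[of q] fst_G_shifted[of "G q"] assms q q1 by (simp_all add: u2_def)
  moreover have "u * v1 = u^2 - u + v - u^2 * v - u * v + u * v^2 + v^2"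
    using q q1 nonzero(1) by (simp add: G_Pair field_simps)
  ultimately have "(u2 + 1) * (u + 1) = (u1 + 1) * ((u + 1) * (u1 + 1) - (u1 + 1) - (u + 1)^2 + 2 * (u + 1))"
    using nonzero by algebra
  then show ?thesis
    unfolding G_recurrence_def using q q1 by (simp add: u2_def)
qed

lemma G_orbit_step:
  assumes "G_recurrence x y z" "fst q + 1 = x" "fst (G q) + 1 = y" "x \<noteq> 0" "x \<noteq> 1" "y \<noteq> 1"
  shows "fst (G (G q)) + 1 = z"
proof -
  have "fst q \<noteq> 0" "fst q \<noteq> -1" "fst (G q) \<noteq> 0"
    using assms(2-6) by (auto simp: eq_neg_iff_add_eq_0)
  then have "G_recurrence x y (fst (G (G q)) + 1)"
    using G_recurrence_along_orbit assms(2,3) by blast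
  then show ?thesis
    using G_recurrence_unique assms(1,4) by blast
qed

lemma fst_G_minus_one: "fst p = -1 \<Longrightarrow> fst (G p) = -1"
  by (cases p) (simp add: G_Pair)

lemma G_G_minus_one: "fst p = -1 \<Longrightarrow> G (G p) = p"
  by (cases p) (simp add: G_Pair field_simps)

lemma fst_funpow_G_minus_one: "fst p = -1 \<Longrightarrow> fst ((G ^^ n) p) = -1"
  by (induction n) (auto simp: fst_G_minus_one)

lemma funpow_gcd_fixed:
  "(f ^^ m) x = x \<Longrightarrow> (f ^^ n) x = x \<Longrightarrow> (f ^^ gcd m n) x = x"
proof (induction m n rule: gcd_nat_induct)
  case (step m n)
  then show ?case
    using funpow_mod_eq[OF step.prems(2), of m] by (simp add: gcd_non_0_nat)
qed simp

lemma exact_period_5I: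
  assumes "\<forall>k<5. fst ((G ^^ k) p) \<noteq> 0" "(G ^^ 5) p = p" "G p \<noteq> p"
  shows "exact_period 5 p"
proof -
  have "(G ^^ k) p \<noteq> p" if "0 < k" "k < 5" for k
  proof
    assume "(G ^^ k) p = p"
    moreover have "gcd k 5 = 1"
    proof -
      have "k \<in> {1, 2, 3, 4}"
        using that by auto
      then show ?thesis
        by (auto simp: gcd_non_0_nat)
    qed
    ultimately show False
      using funpow_gcd_fixed[of k G p 5] assms(2,3) by simp
  qed
  then show ?thesis
    using assms unfolding exact_period_def by blast
qed

lemma exact_period_5_imp_five_cycle:
  assumes "exact_period 5 p"
  defines "x \<equiv> \<lambda>k. fst ((G ^^ k) p) + 1"
  shows "five_cycle (x 0) (x 1) (x 2) (x 3) (x 4) \<and> x 0 \<noteq> 0 \<and> x 0 \<noteq> x 1"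
proof -
  have per: "(G ^^ 5) p = p" and first_nonzero: "\<And>k. k < 5 \<Longrightarrow> fst ((G ^^ k) p) \<noteq> 0"
    and no_return: "\<And>k. 0 < k \<Longrightarrow> k < 5 \<Longrightarrow> (G ^^ k) p \<noteq> p"
    using assms(1) unfolding exact_period_def by auto
  txt \<open>The line \<open>u = -1\<close> is invariant and \<open>G\<close> is an involution on it.\<close>
  have off_line: "fst p \<noteq> -1"
    using G_G_minus_one[of p] no_return[of 2] by (auto simp: numeral_2_eq_2)
  have x_nonzero: "x k \<noteq> 0" if "k < 5" for k
  proof
    assume "x k = 0"
    then have "fst ((G ^^ (5 - k)) ((G ^^ k) p)) = -1"
      using fst_funpow_G_minus_one[of "(G ^^ k) p" "5 - k"] by (simp add: x_def eq_neg_iff_add_eq_0)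
    moreover have "(G ^^ (5 - k)) ((G ^^ k) p) = (G ^^ (5 - k + k)) p"
      by (simp add: funpow_add)
    ultimately show False
      using that per off_line by simp
  qed
  have rec: "G_recurrence (x k) (x (k + 1)) (x (k + 2))" if "k < 5" for k
  proof -
    have "fst (G ((G ^^ k) p)) \<noteq> 0"
      using first_nonzero[of "k + 1"] first_nonzero[of 0] per that
      by (cases "k = 4") (auto simp: eval_nat_numeral)
    then show ?thesis
      using G_recurrence_along_orbit[of "(G ^^ k) p"] first_nonzero[OF that] x_nonzero[OF that]
      by (simp add: x_def eq_neg_iff_add_eq_0)
  qed
  have "(G ^^ 6) p = G ((G ^^ 5) p)"
    by (simp add: numeral_eq_Suc)
  then have "x 5 = x 0" "x 6 = x 1"
    using per by (simp_all add: x_def)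
  then have cycle: "five_cycle (x 0) (x 1) (x 2) (x 3) (x 4)"
    using five_cycle_iff_G_recurrence x_nonzero rec[of 0] rec[of 1] rec[of 2] rec[of 3] rec[of 4]
    by (simp add: numeral_eq_Suc)
  have "x 0 \<noteq> x 1"
  proof
    assume "x 0 = x 1"
    then have "x 2 = x 1"
      using five_cycle_constant[of "x 0" "x 2" "x 3" "x 4"] cycle x_nonzero[of 0] by simp
    then have "p = G p"
      using \<open>x 0 = x 1\<close> first_nonzero[of 0] off_line
      by (intro eq_if_fst_G_eq) (simp_all add: x_def numeral_2_eq_2)
    then show False
      using no_return[of 1] by simp
  qed
  then show ?thesis
    using cycle x_nonzero[of 0] by simp
qed

lemma exact_period_5_imp_P5:
  assumes "exact_period 5 p"
  shows "P5 (fst p) (snd p) = 0"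
proof -
  obtain u v where p: "p = (u, v)"
    by (cases p)
  have "\<forall>k<5. fst ((G ^^ k) p) \<noteq> 0"
    using assms unfolding exact_period_def by simp
  then have u: "u \<noteq> 0" "u + 1 \<noteq> 0"
    using exact_period_5_imp_five_cycle[OF assms] p by (auto dest: spec[of _ 0])
  have "Q5 (u + 1) (fst (G p) + 1) = 0"
    using exact_period_5_imp_five_cycle[OF assms] five_cycle_iff p u(2) by auto
  moreover have "u * (fst (G p) + 1) = (u + 1) * v"
    using fst_G_shifted[of p] u(1) p by simp
  ultimately have "(u + 1)^7 * P5 u v = 0"
    using P5_Q5 by simp
  then show ?thesis
    using u(2) p by simp
qed

lemma five_cycle_nondegenerate:
  assumes "five_cycle a b c d e" "a \<noteq> 0" "a \<noteq> b"
  shows "b \<noteq> 0 \<and> c \<noteq> 0 \<and> d \<noteq> 0 \<and> e \<noteq> 0 \<and> a \<noteq> 1 \<and> b \<noteq> 1 \<and> c \<noteq> 1 \<and> d \<noteq> 1 \<and> e \<noteq> 1"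
proof -
  have cyc': "five_cycle b c d e a" "five_cycle c d e a b" "five_cycle d e a b c" "five_cycle e a b c d"
    using assms(1) five_cycle_rotate by blast+
  have nonzero: "b \<noteq> 0" "c \<noteq> 0" "d \<noteq> 0" "e \<noteq> 0"
    using five_cycle_nonzero[OF assms(1,2)] by simp_all
  have "b \<noteq> c" "c \<noteq> d" "d \<noteq> e" "e \<noteq> a"
    using five_cycle_constant[of b d e a] five_cycle_constant[of c e a b]
      five_cycle_constant[of d a b c] five_cycle_constant[of e b c d] cyc' nonzero assms(2,3)
    by auto
  then show ?thesis
    using five_cycle_ne_one assms cyc' nonzero by blast
qed

text \<open>Two consecutive shifted coordinates determine the next one, so the orbit runs through the
  cycle, and since they also determine the point it returns after five steps.\<close>
lemma five_cycle_orbit_exact_period: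
  assumes cyc: "five_cycle a b c d e" and "a \<noteq> 0" "a \<noteq> b"
    and start: "fst p + 1 = a" "fst (G p) + 1 = b"
  shows "exact_period 5 p"
proof -
  define x where "x k = fst ((G ^^ k) p) + 1" for k
  have cyc': "five_cycle b c d e a" "five_cycle c d e a b" "five_cycle d e a b c" "five_cycle e a b c d"
    using cyc five_cycle_rotate by blast+
  note generic = five_cycle_nondegenerate[OF assms(1-3)] \<open>a \<noteq> 0\<close>
  have step: "x (k + 2) = z" if "x k = x0" "x (k + 1) = y" "G_recurrence x0 y z" "x0 \<noteq> 0" "x0 \<noteq> 1"
    "y \<noteq> 1" for k x0 y z
    using G_orbit_step[of x0 y z "(G ^^ k) p"] that by (simp add: x_def)
  have x0: "x 0 = a" and x1: "x 1 = b"
    using start by (simp_all add: x_def)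
  have x2: "x 2 = c"
    using step[of 0 a b c] x0 x1 five_cycle_imp_G_recurrence[OF cyc] generic
    by (simp add: numeral_eq_Suc)
  have x3: "x 3 = d"
    using step[of 1 b c d] x1 x2 five_cycle_imp_G_recurrence[OF cyc'(1)] generic
    by (simp add: numeral_eq_Suc)
  have x4: "x 4 = e"
    using step[of 2 c d e] x2 x3 five_cycle_imp_G_recurrence[OF cyc'(2)] generic
    by (simp add: numeral_eq_Suc)
  have x5: "x 5 = a"
    using step[of 3 d e a] x3 x4 five_cycle_imp_G_recurrence[OF cyc'(3)] generic
    by (simp add: numeral_eq_Suc)
  have x6: "x 6 = b"
    using step[of 4 e a b] x4 x5 five_cycle_imp_G_recurrence[OF cyc'(4)] generic
    by (simp add: numeral_eq_Suc)
  have "(G ^^ 6) p = G ((G ^^ 5) p)"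
    by (simp add: numeral_eq_Suc)
  then have "fst (G ((G ^^ 5) p)) + 1 = fst (G p) + 1"
    using x6 start(2) by (simp add: x_def)
  moreover have "fst ((G ^^ 5) p) + 1 = fst p + 1"
    using x5 start(1) by (simp add: x_def)
  moreover have "fst p \<noteq> 0" "fst p \<noteq> -1"
    using start(1) generic by (auto simp: eq_neg_iff_add_eq_0)
  ultimately have "(G ^^ 5) p = p"
    using eq_if_fst_G_eq by simp
  moreover have "G p \<noteq> p"
    using start \<open>a \<noteq> b\<close> by auto
  moreover have "\<forall>k<5. fst ((G ^^ k) p) \<noteq> 0"
    using x0 x1 x2 x3 x4 generic by (auto simp: x_def less_Suc_eq numeral_eq_Suc)
  ultimately show ?thesis
    using exact_period_5I by blast
qed

lemma P5_imp_exact_period_5: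
  assumes "P5 u v = 0" "u \<noteq> 0" "u \<noteq> -1" "v \<noteq> u"
  shows "exact_period 5 (u, v)"
proof -
  define a b where "a = u + 1" and "b = (u + 1) * v / u"
  have a: "a \<noteq> 0"
    using assms(3) by (simp add: a_def eq_neg_iff_add_eq_0[symmetric])
  have ub: "u * b = (u + 1) * v"
    using assms(2) by (simp add: b_def)
  have "a \<noteq> b"
  proof
    assume "a = b"
    then have "(u + 1) * u = (u + 1) * v"
      using ub by (simp add: a_def mult.commute)
    then show False
      using a assms(4) by (simp add: a_def)
  qed
  moreover have "Q5 a b = 0"
    using P5_Q5[OF ub] assms(1,2) a by (simp add: a_def)
  ultimately have "five_cycle a b (c_num a b / a) (d_num a b / a^2) (e_num a b / a^2)"
    using five_cycle_iff[OF a] by simp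
  moreover have "u * (fst (G (u, v)) + 1) = u * b"
    using fst_G_shifted[of "(u, v)"] ub assms(2) by (simp add: mult.commute)
  ultimately show ?thesis
    using five_cycle_orbit_exact_period a \<open>a \<noteq> b\<close> assms(2) by (simp add: a_def)
qed

lemma poly_root_near:
  fixes p :: "complex poly"
  assumes "degree p = n" "0 < n"
  shows "\<exists>z. poly p z = 0 \<and> cmod (lead_coeff p) * cmod (x - z)^n \<le> cmod (poly p x)"
  using assms
proof (induction n arbitrary: p)
  case (Suc m)
  obtain z1 where z1: "poly p z1 = 0"
    using fundamental_theorem_of_algebra_alt[of p] Suc.prems by fastforce
  then obtain q where pq: "p = [:-z1, 1:] * q"
    by (metis dvdE poly_eq_0_iff_dvd)
  have "q \<noteq> 0"
    using pq Suc.prems by auto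
  then have dq: "degree q = m"
    using pq Suc.prems(1) degree_mult_eq[of "[:-z1, 1:]" q] by simp
  have lq: "lead_coeff p = lead_coeff q"
    unfolding pq lead_coeff_mult by simp
  have px: "cmod (poly p y) = cmod (y - z1) * cmod (poly q y)" for y
    unfolding pq poly_mult by (simp add: norm_mult)
  show ?case
  proof (cases "m = 0")
    case True
    then show ?thesis
      using z1 lq px[of x] dq by (intro exI[of _ z1]) (auto elim!: degree_eq_zeroE simp: norm_mult)
  next
    case False
    then obtain z2 where z2: "poly q z2 = 0"
      and bound2: "cmod (lead_coeff q) * cmod (x - z2)^m \<le> cmod (poly q x)"
      using Suc.IH[OF dq] by auto
    define z where "z = (if cmod (x - z1) \<le> cmod (x - z2) then z1 else z2)"
    have "poly p z = 0"
      using z1 z2 pq by (simp add: z_def)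
    moreover have "cmod (lead_coeff p) * cmod (x - z)^Suc m
        \<le> cmod (x - z1) * (cmod (lead_coeff q) * cmod (x - z2)^m)"
      using lq by (auto simp: z_def mult_left_mono mult_right_mono power_mono mult.assoc mult.left_commute)
    ultimately show ?thesis
      using bound2 px[of x] by (metis mult_left_mono norm_ge_zero order_trans)
  qed
qed simp

definition P5_poly :: "complex \<Rightarrow> complex poly" where
  "P5_poly u = [: u^3, 2 * u^3 + 2 * u^4 - u^5 - u^6, - 2 * u^2 - 4 * u^3 + 3 * u^4 + 7 * u^5 + u^6 - u^7,
    u + 4 * u^2 - 5 * u^3 - 16 * u^4 - 5 * u^5 + 5 * u^6 + 2 * u^7,
    - 2 * u + 6 * u^2 + 19 * u^3 + 6 * u^4 - 12 * u^5 - 8 * u^6 - u^7,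
    1 - 4 * u - 12 * u^2 + 18 * u^4 + 14 * u^5 + 3 * u^6, 2 + 3 * u - 6 * u^2 - 16 * u^3 - 12 * u^4 - 3 * u^5,
    (u + 1)^4 :]"

lemma poly_P5_poly: "poly (P5_poly u) v = P5 u v"
  unfolding P5_poly_def P5_def by simp algebra

lemma degree_P5_poly: "u \<noteq> -1 \<Longrightarrow> degree (P5_poly u) = 7 \<and> lead_coeff (P5_poly u) = (u + 1)^4"
  by (simp add: P5_poly_def eval_nat_numeral eq_neg_iff_add_eq_0)

lemma P5_minus_one: "P5 (-1) v = -1"
  unfolding P5_def by algebra

lemma P5_diagonal: "P5 u u = u^3 * (1 + u + u^2 + u^3 + u^4)"
  unfolding P5_def by algebra

lemma finite_cyclotomic_5_roots: "finite {u :: complex. 1 + u + u^2 + u^3 + u^4 = 0}"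
proof -
  have "{u :: complex. 1 + u + u^2 + u^3 + u^4 = 0} = {u. poly [:1, 1, 1, 1, 1:] u = 0}"
    by (simp add: algebra_simps eval_nat_numeral)
  then show ?thesis
    using poly_roots_finite[of "[:1, 1, 1, 1, 1:] :: complex poly"] by simp
qed

lemma P5_root_near:
  assumes "u \<noteq> -1"
  shows "\<exists>v. P5 u v = 0 \<and> cmod (v0 - v)^7 \<le> cmod (P5 u v0 / (u + 1)^4)"
proof -
  obtain v where "P5 u v = 0" and bound: "cmod ((u + 1)^4) * cmod (v0 - v)^7 \<le> cmod (P5 u v0)"
    using poly_root_near[of "P5_poly u" 7 v0] degree_P5_poly[OF assms] by (auto simp: poly_P5_poly)
  moreover have "cmod (v0 - v)^7 \<le> cmod (P5 u v0 / (u + 1)^4)"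
    using bound assms by (simp add: norm_divide field_simps eq_neg_iff_add_eq_0)
  ultimately show ?thesis
    by blast
qed

lemma P5_zero_set_subset_closure: "{(u, v). P5 u v = 0} \<subseteq> closure {p. exact_period 5 p}"
proof clarify
  fix u0 v0 assume on_curve: "P5 u0 v0 = 0"
  have "u0 \<noteq> -1"
    using on_curve P5_minus_one by auto
  then have lead_nonzero: "(u0 + 1)^4 \<noteq> 0"
    by (simp add: eq_neg_iff_add_eq_0)
  show "(u0, v0) \<in> closure {p. exact_period 5 p}"
    unfolding closure_approachable
  proof (intro allI impI)
    fix \<epsilon> :: real assume "\<epsilon> > 0"
    define h where "h u = P5 u v0 / (u + 1)^4" for u
    define bad where "bad = {0, -1} \<union> {u :: complex. 1 + u + u^2 + u^3 + u^4 = 0}"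
    have "isCont h u0"
      unfolding h_def P5_def using lead_nonzero by (intro continuous_intros) auto
    moreover have "h u0 = 0"
      using on_curve by (simp add: h_def)
    ultimately have "eventually (\<lambda>u. dist (h u) 0 < (\<epsilon>/2)^7) (at u0)"
      using \<open>\<epsilon> > 0\<close> by (intro tendstoD) (auto simp: isCont_def)
    moreover have "eventually (\<lambda>u. dist u u0 < \<epsilon>/2) (at u0)"
      using \<open>\<epsilon> > 0\<close> by (intro tendstoD tendsto_ident_at) simp
    moreover have "eventually (\<lambda>u. u \<notin> bad) (at u0)"
      using islimpt_finite[of bad u0] finite_cyclotomic_5_roots
      by (simp add: islimpt_iff_eventually bad_def)
    ultimately have "eventually (\<lambda>u. dist (h u) 0 < (\<epsilon>/2)^7 \<and> dist u u0 < \<epsilon>/2 \<and> u \<notin> bad) (at u0)"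
      by (intro eventually_conj)
    then obtain u where h_small: "cmod (h u) < (\<epsilon>/2)^7" and u_close: "dist u u0 < \<epsilon>/2"
      and "u \<notin> bad"
      using eventually_happens'[OF at_neq_bot] by auto
    then have u: "u \<noteq> 0" "u \<noteq> -1" "1 + u + u^2 + u^3 + u^4 \<noteq> 0"
      by (auto simp: bad_def)
    obtain v where root: "P5 u v = 0" and "cmod (v0 - v)^7 \<le> cmod (h u)"
      using P5_root_near[OF u(2)] by (auto simp: h_def)
    then have "cmod (v0 - v)^7 < (\<epsilon>/2)^7"
      using h_small by simp
    then have "cmod (v0 - v) < \<epsilon>/2"
      using power_less_imp_less_base \<open>\<epsilon> > 0\<close> by fastforce
    then have v_close: "dist v v0 < \<epsilon>/2"
      by (simp add: dist_norm norm_minus_commute)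
    have "v \<noteq> u"
      using root u P5_diagonal[of u] by auto
    then have "exact_period 5 (u, v)"
      using P5_imp_exact_period_5 root u by blast
    moreover have "dist (u, v) (u0, v0) < \<epsilon>"
      unfolding dist_Pair_Pair using u_close v_close by (intro sqrt_sum_squares_half_less) auto
    ultimately show "\<exists>p\<in>{p. exact_period 5 p}. dist p (u0, v0) < \<epsilon>"
      by blast
  qed
qed

lemma continuous_on_poly2: "poly2 f \<Longrightarrow> continuous_on S (\<lambda>p. f (fst p) (snd p))"
  unfolding poly2_def by (auto intro!: continuous_intros)

lemma zariski_closed_imp_closed: "zariski_closed A \<Longrightarrow> closed A"
proof -
  assume "zariski_closed A"
  then obtain F where F: "\<forall>f\<in>F. poly2 f" and A: "A = {(u, v). \<forall>f\<in>F. f u v = 0}"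
    unfolding zariski_closed_def by blast
  have "A = (\<Inter>f\<in>F. {p. f (fst p) (snd p) = 0})"
    unfolding A by auto
  moreover have "closed {p. f (fst p) (snd p) = 0}" if "f \<in> F" for f
    using F that by (intro closed_Collect_eq continuous_on_poly2 continuous_on_const) auto
  ultimately show "closed A"
    by auto
qed

lemma zariski_closure_eqI:
  assumes "zariski_closed Z" "S \<subseteq> Z" "Z \<subseteq> closure S"
  shows "zariski_closure S = Z"
proof -
  have "Z \<subseteq> A" if "zariski_closed A" "S \<subseteq> A" for A
    using assms(3) closure_minimal[OF that(2) zariski_closed_imp_closed[OF that(1)]] by blast
  then show ?thesis
    using assms(1,2) unfolding zariski_closure_def by blast
qed

definition P5_coeffs :: "int list list" where
  "P5_coeffs = [[0, 0, 0, 0, 0, 1, 2, 1], [0, 0, 0, 1, -2, -4, 3, 4], [0, 0, -2, 4, 6, -12, -6, 6], [1, 2, -4, -5, 19, 0, -16, 4], [0, 2, 3, -16, 6, 18, -12, 1], [0, -1, 7, -5, -12, 14, -3, 0], [0, -1, 1, 5, -8, 3, 0, 0], [0, 0, -1, 2, -1, 0, 0, 0]]"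

lemma zariski_closed_P5: "zariski_closed {(u, v). P5 u v = 0}"
proof -
  have "P5 u v = (\<Sum>i\<le>7. \<Sum>j\<le>7. of_int (P5_coeffs ! i ! j) * u^i * v^j)" for u v
    by (simp add: eval_nat_numeral sum.atMost_Suc P5_coeffs_def P5_def)
  then have "poly2 P5"
    unfolding poly2_def by (intro exI[of _ 7] exI[of _ "\<lambda>i j. of_int (P5_coeffs ! i ! j)"]) blast
  then show ?thesis
    unfolding zariski_closed_def by (intro exI[of _ "{P5}"]) auto
qed

theorem mainTheorem7:
  shows "{p. exact_period 5 p} \<subseteq> {(u,v). P5 u v = 0} \<and>
         zariski_closure {p. exact_period 5 p} = {(u,v). P5 u v = 0}"
proof -
  have periodic_on_curve: "{p. exact_period 5 p} \<subseteq> {(u,v). P5 u v = 0}"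
    using exact_period_5_imp_P5 by auto
  then show ?thesis
    using zariski_closure_eqI[OF zariski_closed_P5 _ P5_zero_set_subset_closure] by blast
qed

end
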